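(* Let $X$ be an uncertain variable on $\Omega$ with finite range, let $\epsilon>0$, and let $\mathfrak{M}$ be a map defined on $[\![X]\!]$ with finite image such that $Y:=\mathfrak{M}\circ X$ is $\epsilon$-identifiable, i.e., $|[\![X\mid Y(\omega)=y]\!]|\geq |[\![X]\!]|\,2^{-\epsilon}$ for all $y\in[\![Y]\!]$. Then $$\mathcal{L}_\star(X\rightarrow Y)\leq \log_2\big(|[\![X]\!]|(1-2^{-\epsilon}) + 1\big).$$
   Context: Let $\Omega$ be a set. An uncertain variable (uv) is a map $X:\Omega\to\mathbb{X}$ into some set; all uvs considered have finite ranges. The range of $X$ is $[\![X]\!]:=\{X(\omega):\omega\in\Omega\}$; the conditional range is $[\![X\mid Y(\omega)=y]\!]:=\{X(\omega):\omega\in\Omega,\ Y(\omega)=y\}$. The non-stochastic brute-force guessing leakage from a uv $U$ to a uv $Y$ is $$\mathcal{L}(U\rightarrow Y):=\log_2\left(\frac{|[\![U]\!]|}{\min_{y\in[\![Y]\!]}|[\![U\mid Y(\omega)=y]\!]|}\right).$$ The maximal non-stochastic brute-force leakage from $X$ to $Y$ is $$\mathcal{L}_\star(X\rightarrow Y):=\sup_{g}\ \mathcal{L}(g\circ X\rightarrow Y),$$ where the supremum ranges over all finite sets $\mathcal{U}$ and all functions $g:[\![X]\!]\to\mathcal{U}$. *)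

theory Defs
  imports Main Complex_Main
begin

text \<open>Uncertain variables are maps from the sample type 'w (playing the role of Omega).\<close>

definition uv_range :: "('w \<Rightarrow> 'a) \<Rightarrow> 'a set" where
  "uv_range X = X ` UNIV"

definition cond_range :: "('w \<Rightarrow> 'a) \<Rightarrow> ('w \<Rightarrow> 'b) \<Rightarrow> 'b \<Rightarrow> 'a set" where
  "cond_range X Y y = {X w | w. Y w = y}"

definition bf_leakage :: "('w \<Rightarrow> 'a) \<Rightarrow> ('w \<Rightarrow> 'b) \<Rightarrow> real" where
  "bf_leakage U Y =
     log 2 (real (card (uv_range U)) /
            real (Min ((\<lambda>y. card (cond_range U Y y)) ` uv_range Y)))"

text \<open>Maximal non-stochastic brute-force leakage: supremum over all functions g from
  the range of X into a codomain type 'u (the image g ` [[X]] is automatically finite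
  when [[X]] is finite; the type 'u is universally quantified wherever Lstar is used).\<close>
definition max_bf_leakage :: "'u itself \<Rightarrow> ('w \<Rightarrow> 'x) \<Rightarrow> ('w \<Rightarrow> 'y) \<Rightarrow> real" where
  "max_bf_leakage _ X Y = (SUP g \<in> (UNIV :: ('x \<Rightarrow> 'u) set). bf_leakage (g \<circ> X) Y)"

end

theory Submission
  imports Defs
begin

text \<open>Let every fibre [[X | Y = y]] have at least k elements and pick y whose coarsened
  fibre [[g X | Y = y]] has the minimal size K. The map g sends [[X]] onto [[g X]]; the fibre
  contributes only K values, and the at most |[[X]]| - k points outside it at most one each.
  Hence |[[g X]]| \<le> K + c with c = |[[X]]| - k, and since K \<ge> 1 the guessing ratio
  |[[g X]]| / K is at most c + 1, uniformly in g.\<close>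

lemma card_image_le_card_image_subset:
  assumes "finite S" "A \<subseteq> S"
  shows "real (card (g ` S)) \<le> real (card (g ` A)) + real (card S) - real (card A)"
proof -
  have "card (g ` S) \<le> card (g ` A \<union> g ` (S - A))"
    using assms by (intro card_mono) (auto intro: finite_subset)
  also have "\<dots> \<le> card (g ` A) + card (g ` (S - A))" by (rule card_Un_le)
  also have "card (g ` (S - A)) \<le> card (S - A)" by (rule card_image_le) (use assms in auto)
  also have "card (S - A) = card S - card A" using assms by (simp add: card_Diff_subset finite_subset)
  finally have "card (g ` S) \<le> card (g ` A) + (card S - card A)" by simp
  moreover have "card A \<le> card S" using assms by (simp add: card_mono)
  ultimately show ?thesis by (simp add: of_nat_diff)
qed

lemma divide_le_plus_one:
  fixes m k c :: real
  assumes "m \<le> k + c" "k \<ge> 1" "c \<ge> 0"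
  shows "m / k \<le> c + 1"
proof -
  have "m \<le> (c + 1) * k" using assms mult_left_mono[of 1 k c] by (simp add: algebra_simps)
  thus ?thesis using assms by (simp add: divide_le_eq)
qed

lemma uv_range_comp: "uv_range (g \<circ> X) = g ` uv_range X"
  unfolding uv_range_def by (simp add: image_comp)

lemma cond_range_comp: "cond_range (g \<circ> X) Y y = g ` cond_range X Y y"
  unfolding cond_range_def by auto

lemma cond_range_subset_uv_range: "cond_range X Y y \<subseteq> uv_range X"
  unfolding cond_range_def uv_range_def by auto

lemma cond_range_nonempty: "y \<in> uv_range Y \<Longrightarrow> cond_range X Y y \<noteq> {}"
  unfolding cond_range_def uv_range_def by auto

lemma bf_leakage_comp_le:
  assumes finX: "finite (uv_range X)" and finY: "finite (uv_range Y)"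
    and fibres: "\<forall>y \<in> uv_range Y. k \<le> real (card (cond_range X Y y))"
  shows "bf_leakage (g \<circ> X) Y \<le> log 2 (real (card (uv_range X)) - k + 1)"
proof -
  let ?n = "real (card (uv_range X))"
  define K where "K = (\<lambda>y. card (cond_range (g \<circ> X) Y y)) ` uv_range Y"
  have "finite K" "K \<noteq> {}" using finY unfolding K_def uv_range_def by auto
  then have "Min K \<in> K" by (rule Min_in)
  then obtain y0 where y0: "y0 \<in> uv_range Y" "Min K = card (g ` cond_range X Y y0)"
    unfolding K_def by (auto simp: cond_range_comp)
  have fibre_fin: "finite (cond_range X Y y0)"
    by (rule finite_subset[OF cond_range_subset_uv_range finX])
  have fibre_ne: "cond_range X Y y0 \<noteq> {}" using y0(1) by (rule cond_range_nonempty)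
  have k_le: "k \<le> real (card (cond_range X Y y0))" using fibres y0(1) by blast
  let ?K = "real (Min K)" and ?m = "real (card (uv_range (g \<circ> X)))"
  have K_ge_1: "?K \<ge> 1" using y0(2) fibre_fin fibre_ne by (simp add: Suc_leI card_gt_0_iff)
  have "?m \<le> ?K + ?n - real (card (cond_range X Y y0))"
    using card_image_le_card_image_subset[OF finX cond_range_subset_uv_range] y0(2)
    by (simp add: uv_range_comp)
  then have "?m \<le> ?K + (?n - k)" using k_le by linarith
  moreover have "?n - k \<ge> 0"
    using k_le card_mono[OF finX cond_range_subset_uv_range, of Y y0] by linarith
  ultimately have "?m / ?K \<le> ?n - k + 1" using K_ge_1 by (intro divide_le_plus_one) auto
  moreover have "?m > 0"
    using finX by (simp add: uv_range_comp card_gt_0_iff) (simp add: uv_range_def)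
  then have "?m / ?K > 0" using K_ge_1 by simp
  ultimately have "log 2 (?m / ?K) \<le> log 2 (?n - k + 1)" by (intro log_mono) auto
  then show ?thesis unfolding bf_leakage_def K_def by simp
qed

lemma max_bf_leakage_le:
  assumes "finite (uv_range X)" "finite (uv_range Y)"
    and "\<forall>y \<in> uv_range Y. k \<le> real (card (cond_range X Y y))"
  shows "max_bf_leakage TYPE('u) X Y \<le> log 2 (real (card (uv_range X)) - k + 1)"
  unfolding max_bf_leakage_def using bf_leakage_comp_le[OF assms] by (intro cSUP_least) auto

theorem mainTheorem7:
  fixes X :: "'w \<Rightarrow> 'x" and M :: "'x \<Rightarrow> 'y" and Y :: "'w \<Rightarrow> 'y" and \<epsilon> :: real
  assumes "finite (uv_range X)"
    and "\<epsilon> > 0"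
    and "Y = M \<circ> X"
    and "\<forall>y \<in> uv_range Y. real (card (cond_range X Y y)) \<ge> real (card (uv_range X)) * 2 powr (-\<epsilon>)"
  shows "max_bf_leakage TYPE('u) X Y \<le> log 2 (real (card (uv_range X)) * (1 - 2 powr (-\<epsilon>)) + 1)"
proof -
  have "finite (uv_range Y)" using assms(1,3) by (simp add: uv_range_comp)
  then have "max_bf_leakage TYPE('u) X Y
      \<le> log 2 (real (card (uv_range X)) - real (card (uv_range X)) * 2 powr (-\<epsilon>) + 1)"
    using max_bf_leakage_le assms(1,4) by blast
  moreover have "real (card (uv_range X)) - real (card (uv_range X)) * 2 powr (-\<epsilon>)
      = real (card (uv_range X)) * (1 - 2 powr (-\<epsilon>))"
    by (rule right_diff_distrib'[symmetric, of _ 1, simplified])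
  ultimately show ?thesis by simp
qed

end
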